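(* Let $\mathcal{A}$ be an alternative $W^{*}$-factor, $\mathcal{B}$ an alternative complex $\ast$-algebra, and $\Phi:\mathcal{A}\to\mathcal{B}$ a bijection preserving product $ab+ba^{*}$ (resp. $ab-ba^{*}$). Let $p_{1}\in\mathcal{A}$ be a projection with $p_{1}\neq 1_{\mathcal{A}}$, $p_{2}=1_{\mathcal{A}}-p_{1}$, and $\mathcal{A}_{ij}=p_{i}\mathcal{A}p_{j}$. Then $\Phi(a_{11}+b_{12}+c_{21}+d_{22})=\Phi(a_{11})+\Phi(b_{12})+\Phi(c_{21})+\Phi(d_{22})$ for all $a_{11}\in\mathcal{A}_{11}$, $b_{12}\in\mathcal{A}_{12}$, $c_{21}\in\mathcal{A}_{21}$, $d_{22}\in\mathcal{A}_{22}$.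
   Context: An alternative $W^{*}$-factor is a prime alternative $C^{*}$-algebra (complete normed alternative complex $\ast$-algebra with $\|a^{*}a\|=\|a\|^{2}$) that is a dual Banach space; it is unital. A projection is a nonzero self-adjoint idempotent. $\mathcal{A}_{ij}$ are the Peirce components with respect to $p_{1}$. $\Phi$ preserves product $ab+ba^{*}$ (resp. $ab-ba^{*}$) if $\Phi(ab+ba^{*})=\Phi(a)\Phi(b)+\Phi(b)\Phi(a)^{*}$ (resp. $\Phi(ab-ba^{*})=\Phi(a)\Phi(b)-\Phi(b)\Phi(a)^{*}$) for all $a,b\in\mathcal{A}$. *)

theory Defs
  imports Complex_Main
begin

text \<open>Nonassociative algebras are given by explicit operations on a carrier type
  whose additive group structure is the type's own: complex scalar multiplication
  sc, product mul, involution st, norm nrm.\<close>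

definition complex_module :: "(complex \<Rightarrow> 'a::ab_group_add \<Rightarrow> 'a) \<Rightarrow> bool" where
  "complex_module sc \<longleftrightarrow>
     (\<forall>c x y. sc c (x + y) = sc c x + sc c y) \<and>
     (\<forall>c d x. sc (c + d) x = sc c x + sc d x) \<and>
     (\<forall>c d x. sc (c * d) x = sc c (sc d x)) \<and>
     (\<forall>x. sc 1 x = x)"

definition complex_algebra ::
  "(complex \<Rightarrow> 'a::ab_group_add \<Rightarrow> 'a) \<Rightarrow> ('a \<Rightarrow> 'a \<Rightarrow> 'a) \<Rightarrow> bool" where
  "complex_algebra sc mul \<longleftrightarrow> complex_module sc \<and>
     (\<forall>x y z. mul (x + y) z = mul x z + mul y z) \<and>
     (\<forall>x y z. mul x (y + z) = mul x y + mul x z) \<and>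
     (\<forall>c x y. mul (sc c x) y = sc c (mul x y)) \<and>
     (\<forall>c x y. mul x (sc c y) = sc c (mul x y))"

definition alternative_algebra ::
  "(complex \<Rightarrow> 'a::ab_group_add \<Rightarrow> 'a) \<Rightarrow> ('a \<Rightarrow> 'a \<Rightarrow> 'a) \<Rightarrow> bool" where
  "alternative_algebra sc mul \<longleftrightarrow> complex_algebra sc mul \<and>
     (\<forall>x y. mul (mul x x) y = mul x (mul x y)) \<and>
     (\<forall>x y. mul (mul y x) x = mul y (mul x x))"

definition alt_star_algebra ::
  "(complex \<Rightarrow> 'a::ab_group_add \<Rightarrow> 'a) \<Rightarrow> ('a \<Rightarrow> 'a \<Rightarrow> 'a) \<Rightarrow> ('a \<Rightarrow> 'a) \<Rightarrow> bool" where
  "alt_star_algebra sc mul st \<longleftrightarrow> alternative_algebra sc mul \<and>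
     (\<forall>x y. st (x + y) = st x + st y) \<and>
     (\<forall>c x. st (sc c x) = sc (cnj c) (st x)) \<and>
     (\<forall>x. st (st x) = x) \<and>
     (\<forall>x y. st (mul x y) = mul (st y) (st x))"

definition alt_C_star_algebra ::
  "(complex \<Rightarrow> 'a::ab_group_add \<Rightarrow> 'a) \<Rightarrow> ('a \<Rightarrow> 'a \<Rightarrow> 'a) \<Rightarrow> ('a \<Rightarrow> 'a) \<Rightarrow> ('a \<Rightarrow> real) \<Rightarrow> bool" where
  "alt_C_star_algebra sc mul st nrm \<longleftrightarrow> alt_star_algebra sc mul st \<and>
     (\<forall>x. nrm x = 0 \<longleftrightarrow> x = 0) \<and>
     (\<forall>x y. nrm (x + y) \<le> nrm x + nrm y) \<and>
     (\<forall>c x. nrm (sc c x) = cmod c * nrm x) \<and>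
     (\<forall>x y. nrm (mul x y) \<le> nrm x * nrm y) \<and>
     (\<forall>X :: nat \<Rightarrow> 'a. (\<forall>e>0. \<exists>N. \<forall>m\<ge>N. \<forall>n\<ge>N. nrm (X m - X n) < e) \<longrightarrow>
        (\<exists>L. (\<lambda>n. nrm (X n - L)) \<longlonglongrightarrow> 0)) \<and>
     (\<forall>x. nrm (mul (st x) x) = (nrm x)\<^sup>2)"

definition alg_ideal ::
  "(complex \<Rightarrow> 'a::ab_group_add \<Rightarrow> 'a) \<Rightarrow> ('a \<Rightarrow> 'a \<Rightarrow> 'a) \<Rightarrow> 'a set \<Rightarrow> bool" where
  "alg_ideal sc mul I \<longleftrightarrow> 0 \<in> I \<and>
     (\<forall>x\<in>I. \<forall>y\<in>I. x + y \<in> I) \<and>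
     (\<forall>c. \<forall>x\<in>I. sc c x \<in> I) \<and>
     (\<forall>x\<in>I. \<forall>a. mul a x \<in> I \<and> mul x a \<in> I)"

definition prime_algebra ::
  "(complex \<Rightarrow> 'a::ab_group_add \<Rightarrow> 'a) \<Rightarrow> ('a \<Rightarrow> 'a \<Rightarrow> 'a) \<Rightarrow> bool" where
  "prime_algebra sc mul \<longleftrightarrow> (UNIV :: 'a set) \<noteq> {0} \<and>
     (\<forall>I J. alg_ideal sc mul I \<and> alg_ideal sc mul J \<and> I \<noteq> {0} \<and> J \<noteq> {0} \<longrightarrow>
        (\<exists>x\<in>I. \<exists>y\<in>J. mul x y \<noteq> 0))"

definition bdd_lin_fun ::
  "(complex \<Rightarrow> 'a::ab_group_add \<Rightarrow> 'a) \<Rightarrow> ('a \<Rightarrow> real) \<Rightarrow> ('a \<Rightarrow> complex) \<Rightarrow> bool" where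
  "bdd_lin_fun sc nrm f \<longleftrightarrow>
     (\<forall>x y. f (x + y) = f x + f y) \<and> (\<forall>c x. f (sc c x) = c * f x) \<and>
     (\<exists>K. \<forall>x. cmod (f x) \<le> K * nrm x)"

definition fun_norm :: "('a \<Rightarrow> real) \<Rightarrow> ('a \<Rightarrow> complex) \<Rightarrow> real" where
  "fun_norm nrm f = Sup {cmod (f x) | x. nrm x \<le> 1}"

text \<open>Dual Banach space: there is a norm-closed subspace F of the dual of A (a predual)
  such that the canonical map A \<rightarrow> F*, a \<mapsto> (f \<mapsto> f a), is an isometric
  linear bijection onto F*.  (A \<cong> E* for a Banach space E iff this holds, taking
  F the image of E in A*.)\<close>
definition dual_banach_space ::
  "(complex \<Rightarrow> 'a::ab_group_add \<Rightarrow> 'a) \<Rightarrow> ('a \<Rightarrow> real) \<Rightarrow> bool" where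
  "dual_banach_space sc nrm \<longleftrightarrow>
     (\<exists>F. F \<subseteq> {f. bdd_lin_fun sc nrm f} \<and> (\<lambda>_. 0) \<in> F \<and>
        (\<forall>f\<in>F. \<forall>g\<in>F. (\<lambda>x. f x + g x) \<in> F) \<and>
        (\<forall>c. \<forall>f\<in>F. (\<lambda>x. c * f x) \<in> F) \<and>
        (\<forall>X f. (\<forall>n. X n \<in> F) \<and> bdd_lin_fun sc nrm f \<and>
             (\<lambda>n. fun_norm nrm (\<lambda>x. X n x - f x)) \<longlonglongrightarrow> 0 \<longrightarrow> f \<in> F) \<and>
        (\<forall>\<phi> :: ('a \<Rightarrow> complex) \<Rightarrow> complex.
           (\<forall>f\<in>F. \<forall>g\<in>F. \<phi> (\<lambda>x. f x + g x) = \<phi> f + \<phi> g) \<and>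
           (\<forall>c. \<forall>f\<in>F. \<phi> (\<lambda>x. c * f x) = c * \<phi> f) \<and>
           (\<exists>K. \<forall>f\<in>F. cmod (\<phi> f) \<le> K * fun_norm nrm f) \<longrightarrow>
           (\<exists>a. \<forall>f\<in>F. \<phi> f = f a)) \<and>
        (\<forall>a. nrm a = Sup {cmod (f a) | f. f \<in> F \<and> fun_norm nrm f \<le> 1}))"

definition alt_W_star_factor ::
  "(complex \<Rightarrow> 'a::ab_group_add \<Rightarrow> 'a) \<Rightarrow> ('a \<Rightarrow> 'a \<Rightarrow> 'a) \<Rightarrow> ('a \<Rightarrow> 'a) \<Rightarrow> ('a \<Rightarrow> real) \<Rightarrow> bool" where
  "alt_W_star_factor sc mul st nrm \<longleftrightarrow>
     alt_C_star_algebra sc mul st nrm \<and> prime_algebra sc mul \<and> dual_banach_space sc nrm"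

definition alg_unit :: "('a \<Rightarrow> 'a \<Rightarrow> 'a) \<Rightarrow> 'a \<Rightarrow> bool" where
  "alg_unit mul u \<longleftrightarrow> (\<forall>x. mul u x = x \<and> mul x u = x)"

definition is_projection :: "('a::zero \<Rightarrow> 'a \<Rightarrow> 'a) \<Rightarrow> ('a \<Rightarrow> 'a) \<Rightarrow> 'a \<Rightarrow> bool" where
  "is_projection mul st p \<longleftrightarrow> p \<noteq> 0 \<and> st p = p \<and> mul p p = p"

definition peirce :: "('a \<Rightarrow> 'a \<Rightarrow> 'a) \<Rightarrow> 'a \<Rightarrow> 'a \<Rightarrow> 'a set" where
  "peirce mul p q = {mul (mul p a) q | a. True}"

end

theory Submission
  imports Defs
begin

text \<open>Let \<open>t\<close> be the preimage of \<open>\<Phi> a\<^sub>1\<^sub>1 + \<Phi> b\<^sub>1\<^sub>2 + \<Phi> c\<^sub>2\<^sub>1 + \<Phi> d\<^sub>2\<^sub>2\<close>.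
  Since \<open>\<Phi>\<close> carries the product \<open>a \<circ> b\<close> to a biadditive one, every map \<open>E\<close> that multiplies
  its argument by fixed elements satisfies \<open>\<Phi> (E x) = H (\<Phi> x)\<close> with \<open>H\<close> additive, so
  \<open>\<Phi> (E t)\<close> is the sum of the \<open>\<Phi> (E s)\<close> over the four summands \<open>s\<close>.  Suitable such maps
  isolate one Peirce component: for \<open>a \<circ> b = ab + ba\<^sup>*\<close>, \<open>x \<mapsto> p \<circ> ((p - q) \<circ> x)\<close> gives
  \<open>4 x\<^sub>1\<^sub>1\<close> and \<open>x \<mapsto> p \<circ> (x \<circ> q)\<close> gives \<open>x\<^sub>1\<^sub>2 + x\<^sub>1\<^sub>2\<^sup>*\<close>; for \<open>a \<circ> b = ab - ba\<^sup>*\<close> the diagonal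
  probes use \<open>\<i> p\<close> and \<open>\<i> (p - q)\<close>, because \<open>(\<i> a) b - b (\<i> a)\<^sup>* = \<i> (ab + ba\<^sup>*)\<close>.  By
  injectivity of \<open>\<Phi>\<close>, \<open>t\<close> then has the same Peirce components as \<open>a\<^sub>1\<^sub>1 + b\<^sub>1\<^sub>2 + c\<^sub>2\<^sub>1 + d\<^sub>2\<^sub>2\<close>.\<close>

definition factors_additively :: "('a \<Rightarrow> 'b::plus) \<Rightarrow> ('a \<Rightarrow> 'a) \<Rightarrow> bool" where
  "factors_additively \<Phi> E \<longleftrightarrow>
     (\<exists>H. (\<forall>u v. H (u + v) = H u + H v) \<and> (\<forall>x. \<Phi> (E x) = H (\<Phi> x)))"

lemma factors_additively_comp:
  assumes "factors_additively \<Phi> E" and "factors_additively \<Phi> F"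
  shows "factors_additively \<Phi> (\<lambda>x. E (F x))"
proof -
  obtain H where "\<forall>u v. H (u + v) = H u + H v" "\<forall>x. \<Phi> (E x) = H (\<Phi> x)"
    using assms(1) unfolding factors_additively_def by blast
  moreover obtain K where "\<forall>u v. K (u + v) = K u + K v" "\<forall>x. \<Phi> (F x) = K (\<Phi> x)"
    using assms(2) unfolding factors_additively_def by blast
  ultimately show ?thesis
    unfolding factors_additively_def by (intro exI[of _ "\<lambda>u. H (K u)"]) simp
qed

lemma factors_additively_product:
  assumes "\<forall>a b. \<Phi> (P a b) = G (\<Phi> a) (\<Phi> b)"
    and "\<And>u v w. G (u + v) w = G u w + G v w" and "\<And>u v w. G u (v + w) = G u v + G u w"
  shows "factors_additively \<Phi> (\<lambda>x. P a x)" and "factors_additively \<Phi> (\<lambda>x. P x b)"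
  using assms unfolding factors_additively_def
  by (auto intro: exI[of _ "G (\<Phi> a)"] exI[of _ "\<lambda>u. G u (\<Phi> b)"])

lemma factors_additively_sum:
  assumes "factors_additively \<Phi> E" and "\<Phi> t = \<Phi> x1 + \<Phi> x2 + \<Phi> x3 + \<Phi> x4"
  shows "\<Phi> (E t) = \<Phi> (E x1) + \<Phi> (E x2) + \<Phi> (E x3) + \<Phi> (E x4)"
  using assms unfolding factors_additively_def by auto

lemma preserver_zero:
  fixes \<Phi> :: "'a::zero \<Rightarrow> 'b::ab_group_add"
  assumes "surj \<Phi>" and "\<forall>a b. \<Phi> (P a b) = G (\<Phi> a) (\<Phi> b)"
    and "\<And>a. P a 0 = 0" and "\<And>u v w. G (u + v) w = G u w + G v w"
  shows "\<Phi> 0 = 0"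
proof -
  obtain z where z: "\<Phi> z = 0" using assms(1) by (metis surjD)
  have "G 0 w = 0" for w using assms(4)[of 0 0 w] by simp
  then show ?thesis using assms(2,3) z by metis
qed

locale alt_star =
  fixes sc :: "complex \<Rightarrow> 'a::ab_group_add \<Rightarrow> 'a" and mul :: "'a \<Rightarrow> 'a \<Rightarrow> 'a"
    and st :: "'a \<Rightarrow> 'a"
  assumes alt_star: "alt_star_algebra sc mul st"
begin

lemma
  shows sc_add: "sc c (x + y) = sc c x + sc c y"
    and sc_add_scalar: "sc (c + d) x = sc c x + sc d x"
    and sc_mult: "sc (c * d) x = sc c (sc d x)"
    and sc_one: "sc 1 x = x"
    and mul_addl: "mul (x + y) z = mul x z + mul y z"
    and mul_addr: "mul x (y + z) = mul x y + mul x z"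
    and mul_scl: "mul (sc c x) y = sc c (mul x y)"
    and mul_scr: "mul x (sc c y) = sc c (mul x y)"
    and alternative_left: "mul (mul x x) y = mul x (mul x y)"
    and alternative_right: "mul (mul y x) x = mul y (mul x x)"
    and st_add: "st (x + y) = st x + st y"
    and st_sc: "st (sc c x) = sc (cnj c) (st x)"
    and st_st: "st (st x) = x"
    and st_mul: "st (mul x y) = mul (st y) (st x)"
  using alt_star unfolding alt_star_algebra_def alternative_algebra_def
    complex_algebra_def complex_module_def by auto

lemma mul_zero_left [simp]: "mul 0 x = 0"
  using mul_addl[of 0 0 x] by simp

lemma mul_zero_right [simp]: "mul x 0 = 0"
  using mul_addr[of x 0 0] by simp

lemma mul_diffl: "mul (x - y) z = mul x z - mul y z"
  using mul_addl[of "x - y" y z] by (simp add: algebra_simps)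

lemma mul_diffr: "mul z (x - y) = mul z x - mul z y"
  using mul_addr[of z "x - y" y] by (simp add: algebra_simps)

lemma mul_minus_right: "mul x (- y) = - mul x y"
  using mul_diffr[of x 0 y] by simp

lemma st_zero [simp]: "st 0 = 0"
  using st_add[of 0 0] by simp

lemma st_diff: "st (x - y) = st x - st y"
  using st_add[of "x - y" y] by (simp add: algebra_simps)

lemma sc_zero [simp]: "sc c 0 = 0"
  using sc_add[of c 0 0] by simp

lemma sc_minus_scalar: "sc (- c) x = - sc c x"
  using sc_add_scalar[of "- c" c x] sc_add_scalar[of 0 0 x] by (simp add: eq_neg_iff_add_eq_0)

lemma sc_four: "sc 4 x = x + x + x + x"
  using sc_add_scalar[of "1 + 1 + 1" 1 x] sc_add_scalar[of "1 + 1" 1 x] sc_add_scalar[of 1 1 x]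
  by (simp add: sc_one)

lemma sc_cancel:
  assumes "c \<noteq> 0" and "sc c x = sc c y"
  shows "x = y"
  using arg_cong[OF assms(2), of "sc (inverse c)"] assms(1) by (simp add: sc_mult[symmetric] sc_one)

lemma flexible: "mul (mul x y) x = mul x (mul y x)"
proof -
  have "mul (mul (x + y) (x + y)) x = mul (x + y) (mul (x + y) x)"
    by (rule alternative_left)
  then have "mul (mul x y) x + mul (mul y x) x = mul x (mul y x) + mul y (mul x x)"
    by (simp add: mul_addl mul_addr alternative_left algebra_simps)
  then show ?thesis by (simp add: alternative_right)
qed

definition jordan_star :: "'a \<Rightarrow> 'a \<Rightarrow> 'a" where
  "jordan_star a b = mul a b + mul b (st a)"

definition lie_star :: "'a \<Rightarrow> 'a \<Rightarrow> 'a" where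
  "lie_star a b = mul a b - mul b (st a)"

lemma jordan_star_add:
  shows "jordan_star (x + y) z = jordan_star x z + jordan_star y z"
    and "jordan_star x (y + z) = jordan_star x y + jordan_star x z"
  by (simp_all add: jordan_star_def mul_addl mul_addr st_add algebra_simps)

lemma lie_star_add:
  shows "lie_star (x + y) z = lie_star x z + lie_star y z"
    and "lie_star x (y + z) = lie_star x y + lie_star x z"
  by (simp_all add: lie_star_def mul_addl mul_addr st_add algebra_simps)

lemma lie_star_imaginary: "lie_star (sc \<i> a) b = sc \<i> (jordan_star a b)"
  by (simp add: lie_star_def jordan_star_def st_sc mul_scl mul_scr sc_minus_scalar sc_add mul_minus_right)

lemma jordan_star_sc_right: "jordan_star a (sc c b) = sc c (jordan_star a b)"
  by (simp add: jordan_star_def mul_scl mul_scr sc_add)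

end

locale alt_star_unital = alt_star +
  fixes one :: 'a
  assumes unit: "alg_unit mul one"
begin

lemma mul_one_left [simp]: "mul one x = x" and mul_one_right [simp]: "mul x one = x"
  using unit unfolding alg_unit_def by auto

lemma st_one: "st one = one"
  using st_mul[of "st one" one] by (simp add: st_st)

definition in_peirce :: "'a \<Rightarrow> 'a \<Rightarrow> 'a \<Rightarrow> bool" where
  "in_peirce e f x \<longleftrightarrow>
     mul e x = x \<and> mul (one - e) x = 0 \<and> mul x f = x \<and> mul x (one - f) = 0"

lemma in_peirce_st:
  assumes "st e = e" and "st f = f" and "in_peirce e f x"
  shows "in_peirce f e (st x)"
  using assms arg_cong[of _ _ st] unfolding in_peirce_def
  by (metis st_mul st_diff st_one st_zero)

lemma
  assumes "mul e e = e"
  shows in_peirce_diagonal: "in_peirce e e (mul (mul e a) e)"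
    and in_peirce_off_diagonal: "in_peirce e (one - e) (mul (mul e a) (one - e))"
proof -
  have left: "mul e (mul e a) = mul e a"
    using alternative_left[of e a] assms by simp
  have right: "mul (mul (mul e a) e) e = mul (mul e a) e"
    using alternative_right[of "mul e a" e] assms by simp
  have middle: "mul e (mul (mul e a) e) = mul (mul e a) e"
    using flexible[of e "mul e a"] left by simp
  show "in_peirce e e (mul (mul e a) e)"
    unfolding in_peirce_def using left right middle by (simp add: mul_diffl mul_diffr)
  show "in_peirce e (one - e) (mul (mul e a) (one - e))"
    unfolding in_peirce_def using left right middle by (simp add: mul_diffl mul_diffr)
qed

end

locale complementary_projections = alt_star_unital +
  fixes p q :: 'a
  assumes st_p: "st p = p" and idempotent_p: "mul p p = p" and add_p_q: "p + q = one"
begin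

lemma one_minus_p [simp]: "one - p = q" and one_minus_q [simp]: "one - q = p"
  using add_p_q by (auto simp: algebra_simps)

lemma st_q: "st q = q"
  using one_minus_p st_diff st_one st_p by metis

lemma idempotent_q: "mul q q = q"
  using one_minus_p by (metis mul_diffl mul_diffr idempotent_p mul_one_left mul_one_right diff_self diff_zero)

sublocale swap: complementary_projections sc mul st one q p
  by unfold_locales (simp_all add: st_q idempotent_q add.commute add_p_q)
\<comment> \<open>Facts proved later reach \<open>swap\<close> only once the locale is re-entered, hence the
  repeated \<open>context complementary_projections\<close> blocks below.\<close>

lemma in_peirce_components:
  shows "in_peirce p p (mul (mul p x) p)" and "in_peirce p q (mul (mul p x) q)"
  using in_peirce_diagonal[OF idempotent_p] in_peirce_off_diagonal[OF idempotent_p] by simp_all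

lemma peirce_decomposition:
  "x = mul (mul p x) p + mul (mul p x) q + mul (mul q x) p + mul (mul q x) q"
proof -
  have "mul (mul e x) p + mul (mul e x) q = mul e x" for e
    using mul_addr[of "mul e x" p q] by (simp add: add_p_q)
  then show ?thesis
    using mul_addl[of p q x] by (simp add: add_p_q add.assoc)
qed

lemma in_peirce_of_peirce:
  shows "x \<in> peirce mul p p \<Longrightarrow> in_peirce p p x" and "x \<in> peirce mul p q \<Longrightarrow> in_peirce p q x"
  unfolding peirce_def using in_peirce_components by auto

context
  fixes x11 x12 x21 x22 :: 'a
  assumes blocks: "in_peirce p p x11" "in_peirce p q x12" "in_peirce q p x21" "in_peirce q q x22"
begin

lemma block_rules:
  shows "mul p x11 = x11" "mul q x11 = 0" "mul x11 p = x11" "mul x11 q = 0"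
    and "mul p x12 = x12" "mul q x12 = 0" "mul x12 p = 0" "mul x12 q = x12"
    and "mul p x21 = 0" "mul q x21 = x21" "mul x21 p = x21" "mul x21 q = 0"
    and "mul p x22 = 0" "mul q x22 = x22" "mul x22 p = 0" "mul x22 q = x22"
    and "mul p (st x11) = st x11" "mul q (st x11) = 0" "mul (st x11) p = st x11" "mul (st x11) q = 0"
    and "mul p (st x12) = 0" "mul q (st x12) = st x12" "mul (st x12) p = st x12" "mul (st x12) q = 0"
    and "mul p (st x21) = st x21" "mul q (st x21) = 0" "mul (st x21) p = 0" "mul (st x21) q = st x21"
    and "mul p (st x22) = 0" "mul q (st x22) = st x22" "mul (st x22) p = 0" "mul (st x22) q = st x22"
  using blocks in_peirce_st[OF st_p st_p] in_peirce_st[OF st_p st_q] in_peirce_st[OF st_q st_p]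
    in_peirce_st[OF st_q st_q]
  unfolding in_peirce_def by simp_all

lemma probes_on_blocks:
  shows "jordan_star p (jordan_star (p - q) (x11 + x12 + x21 + x22)) = sc 4 x11"
    and "jordan_star p (jordan_star (x11 + x12 + x21 + x22) q) = x12 + st x12"
    and "lie_star p (lie_star (x11 + x12 + x21 + x22) q) = x12 + st x12"
  by (simp_all add: jordan_star_def lie_star_def st_p st_q st_diff st_add sc_four
      mul_addl mul_addr mul_diffl mul_diffr block_rules algebra_simps)

end

end

context complementary_projections
begin

lemma jordan_star_probes:
  shows "jordan_star p (jordan_star (p - q) x) = sc 4 (mul (mul p x) p)"
    and "jordan_star p (jordan_star x q) = mul (mul p x) q + st (mul (mul p x) q)"
  using probes_on_blocks(1,2)[OF in_peirce_components[of x] swap.in_peirce_components(2,1)[of x],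
      folded peirce_decomposition] .

lemma lie_star_probes:
  shows "lie_star (sc \<i> p) (lie_star (sc \<i> (p - q)) x) = sc (- 4) (mul (mul p x) p)"
    and "lie_star p (lie_star x q) = mul (mul p x) q + st (mul (mul p x) q)"
proof -
  show "lie_star (sc \<i> p) (lie_star (sc \<i> (p - q)) x) = sc (- 4) (mul (mul p x) p)"
    by (simp add: lie_star_imaginary jordan_star_sc_right jordan_star_probes(1) sc_mult[symmetric])
  show "lie_star p (lie_star x q) = mul (mul p x) q + st (mul (mul p x) q)"
    using probes_on_blocks(3)[OF in_peirce_components[of x] swap.in_peirce_components(2,1)[of x],
      folded peirce_decomposition] .
qed

lemma off_diagonal_recovery:
  assumes "in_peirce p q y"
  shows "mul (mul p (y + st y)) q = y"
  using assms in_peirce_st[OF st_p st_q assms] unfolding in_peirce_def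
  by (simp add: mul_addl mul_addr)

context
  fixes \<Phi> :: "'a \<Rightarrow> 'b::ab_group_add" and t x11 x12 x21 x22 :: 'a
  assumes inj: "inj \<Phi>" and zero: "\<Phi> 0 = 0"
    and sum: "\<Phi> t = \<Phi> x11 + \<Phi> x12 + \<Phi> x21 + \<Phi> x22"
    and blocks: "in_peirce p p x11" "in_peirce p q x12" "in_peirce q p x21" "in_peirce q q x22"
begin

lemma diagonal_component_eq:
  assumes "c \<noteq> 0" and "factors_additively \<Phi> (\<lambda>x. sc c (mul (mul p x) p))"
  shows "mul (mul p t) p = x11"
proof -
  have "\<Phi> (sc c (mul (mul p t) p)) = \<Phi> (sc c x11)"
    using factors_additively_sum[OF assms(2) sum] by (simp add: block_rules[OF blocks] zero)
  then show ?thesis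
    using assms(1) inj by (metis injD sc_cancel)
qed

lemma off_diagonal_component_eq:
  assumes "factors_additively \<Phi> (\<lambda>x. mul (mul p x) q + st (mul (mul p x) q))"
  shows "mul (mul p t) q = x12"
proof -
  have "\<Phi> (mul (mul p t) q + st (mul (mul p t) q)) = \<Phi> (x12 + st x12)"
    using factors_additively_sum[OF assms sum] by (simp add: block_rules[OF blocks] zero)
  then have "mul (mul p t) q + st (mul (mul p t) q) = x12 + st x12"
    using inj by (metis injD)
  then show ?thesis
    using off_diagonal_recovery[OF in_peirce_components(2)] off_diagonal_recovery[OF blocks(2)]
    by metis
qed

end

end

context complementary_projections
begin

lemma block_sum_eq_if_probes:
  fixes \<Phi> :: "'a \<Rightarrow> 'b::ab_group_add"
  assumes "inj \<Phi>" and "\<Phi> 0 = 0" and "c \<noteq> 0"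
    and "factors_additively \<Phi> (\<lambda>x. sc c (mul (mul p x) p))"
    and "factors_additively \<Phi> (\<lambda>x. sc c (mul (mul q x) q))"
    and "factors_additively \<Phi> (\<lambda>x. mul (mul p x) q + st (mul (mul p x) q))"
    and "factors_additively \<Phi> (\<lambda>x. mul (mul q x) p + st (mul (mul q x) p))"
    and sum: "\<Phi> t = \<Phi> x11 + \<Phi> x12 + \<Phi> x21 + \<Phi> x22"
    and blocks: "in_peirce p p x11" "in_peirce p q x12" "in_peirce q p x21" "in_peirce q q x22"
  shows "t = x11 + x12 + x21 + x22"
proof -
  have swapped_sum: "\<Phi> t = \<Phi> x22 + \<Phi> x21 + \<Phi> x12 + \<Phi> x11"
    using sum by (simp add: ac_simps)
  note at_p = assms(1,2) sum blocks and at_q = assms(1,2) swapped_sum blocks(4,3,2,1)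
  have "mul (mul p t) p = x11"
    using diagonal_component_eq[OF at_p assms(3,4)] .
  moreover have "mul (mul p t) q = x12"
    using off_diagonal_component_eq[OF at_p assms(6)] .
  moreover have "mul (mul q t) p = x21"
    using swap.off_diagonal_component_eq[OF at_q assms(7)] .
  moreover have "mul (mul q t) q = x22"
    using swap.diagonal_component_eq[OF at_q assms(3,5)] .
  ultimately show ?thesis
    using peirce_decomposition[of t] by simp
qed

context
  fixes \<Phi> :: "'a \<Rightarrow> 'b::ab_group_add" and G :: "'b \<Rightarrow> 'b \<Rightarrow> 'b"
  assumes bij: "bij \<Phi>"
    and G_add_left: "\<And>u v w. G (u + v) w = G u w + G v w"
    and G_add_right: "\<And>u v w. G u (v + w) = G u v + G u w"
begin

lemma block_sum_eq_if_preserves_jordan_star: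
  assumes pres: "\<forall>a b. \<Phi> (jordan_star a b) = G (\<Phi> a) (\<Phi> b)"
    and "\<Phi> t = \<Phi> x11 + \<Phi> x12 + \<Phi> x21 + \<Phi> x22"
    and "in_peirce p p x11" "in_peirce p q x12" "in_peirce q p x21" "in_peirce q q x22"
  shows "t = x11 + x12 + x21 + x22"
proof -
  note factors = factors_additively_product[OF pres G_add_left G_add_right]
  have "factors_additively \<Phi> (\<lambda>x. jordan_star e (jordan_star f x))"
    and "factors_additively \<Phi> (\<lambda>x. jordan_star e (jordan_star x f))" for e f
    using factors_additively_comp factors by blast+
  from this(1)[of p "p - q"] this(1)[of q "q - p"] this(2)[of p q] this(2)[of q p]
  have probes: "factors_additively \<Phi> (\<lambda>x. sc 4 (mul (mul p x) p))"
    "factors_additively \<Phi> (\<lambda>x. sc 4 (mul (mul q x) q))"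
    "factors_additively \<Phi> (\<lambda>x. mul (mul p x) q + st (mul (mul p x) q))"
    "factors_additively \<Phi> (\<lambda>x. mul (mul q x) p + st (mul (mul q x) p))"
    by (simp_all add: jordan_star_probes swap.jordan_star_probes)
  have zero: "\<Phi> 0 = 0"
    using preserver_zero[OF bij_is_surj[OF bij] pres _ G_add_left] by (simp add: jordan_star_def)
  show ?thesis
    by (rule block_sum_eq_if_probes[OF bij_is_inj[OF bij] zero _ probes assms(2-)]) simp
qed

lemma block_sum_eq_if_preserves_lie_star:
  assumes pres: "\<forall>a b. \<Phi> (lie_star a b) = G (\<Phi> a) (\<Phi> b)"
    and "\<Phi> t = \<Phi> x11 + \<Phi> x12 + \<Phi> x21 + \<Phi> x22"
    and "in_peirce p p x11" "in_peirce p q x12" "in_peirce q p x21" "in_peirce q q x22"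
  shows "t = x11 + x12 + x21 + x22"
proof -
  note factors = factors_additively_product[OF pres G_add_left G_add_right]
  have "factors_additively \<Phi> (\<lambda>x. lie_star e (lie_star f x))"
    and "factors_additively \<Phi> (\<lambda>x. lie_star e (lie_star x f))" for e f
    using factors_additively_comp factors by blast+
  from this(1)[of "sc \<i> p" "sc \<i> (p - q)"] this(1)[of "sc \<i> q" "sc \<i> (q - p)"]
    this(2)[of p q] this(2)[of q p]
  have probes: "factors_additively \<Phi> (\<lambda>x. sc (- 4) (mul (mul p x) p))"
    "factors_additively \<Phi> (\<lambda>x. sc (- 4) (mul (mul q x) q))"
    "factors_additively \<Phi> (\<lambda>x. mul (mul p x) q + st (mul (mul p x) q))"
    "factors_additively \<Phi> (\<lambda>x. mul (mul q x) p + st (mul (mul q x) p))"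
    by (simp_all add: lie_star_probes swap.lie_star_probes)
  have zero: "\<Phi> 0 = 0"
    using preserver_zero[OF bij_is_surj[OF bij] pres _ G_add_left] by (simp add: lie_star_def)
  show ?thesis
    by (rule block_sum_eq_if_probes[OF bij_is_inj[OF bij] zero _ probes assms(2-)]) simp
qed

end

end

theorem claim2p4:
  fixes scA :: "complex \<Rightarrow> 'a::ab_group_add \<Rightarrow> 'a" and mulA :: "'a \<Rightarrow> 'a \<Rightarrow> 'a"
    and stA :: "'a \<Rightarrow> 'a" and nrmA :: "'a \<Rightarrow> real" and one :: 'a
    and scB :: "complex \<Rightarrow> 'b::ab_group_add \<Rightarrow> 'b" and mulB :: "'b \<Rightarrow> 'b \<Rightarrow> 'b"
    and stB :: "'b \<Rightarrow> 'b"
    and \<Phi> :: "'a \<Rightarrow> 'b" and p1 p2 a11 b12 c21 d22 :: 'a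
  assumes A: "alt_W_star_factor scA mulA stA nrmA"
    and unit: "alg_unit mulA one"
    and B: "alt_star_algebra scB mulB stB"
    and bij: "bij \<Phi>"
    and pres: "(\<forall>a b. \<Phi> (mulA a b + mulA b (stA a)) = mulB (\<Phi> a) (\<Phi> b) + mulB (\<Phi> b) (stB (\<Phi> a)))
             \<or> (\<forall>a b. \<Phi> (mulA a b - mulA b (stA a)) = mulB (\<Phi> a) (\<Phi> b) - mulB (\<Phi> b) (stB (\<Phi> a)))"
    and p1: "is_projection mulA stA p1" and p1_ne: "p1 \<noteq> one"
    and p2: "p2 = one - p1"
    and a11: "a11 \<in> peirce mulA p1 p1" and b12: "b12 \<in> peirce mulA p1 p2"
    and c21: "c21 \<in> peirce mulA p2 p1" and d22: "d22 \<in> peirce mulA p2 p2"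
  shows "\<Phi> (a11 + b12 + c21 + d22) = \<Phi> a11 + \<Phi> b12 + \<Phi> c21 + \<Phi> d22"
proof -
  interpret B: alt_star scB mulB stB
    using B by unfold_locales
  interpret A: complementary_projections scA mulA stA one p1 p2
    using A unit p1 p2 unfolding alt_W_star_factor_def alt_C_star_algebra_def is_projection_def
    by unfold_locales auto
  note blocks = A.in_peirce_of_peirce(1)[OF a11] A.in_peirce_of_peirce(2)[OF b12]
    A.swap.in_peirce_of_peirce(2)[OF c21] A.swap.in_peirce_of_peirce(1)[OF d22]
  obtain t where t: "\<Phi> t = \<Phi> a11 + \<Phi> b12 + \<Phi> c21 + \<Phi> d22"
    using bij_is_surj[OF bij] by (metis surjD)
  from pres have "t = a11 + b12 + c21 + d22"
  proof
    assume "\<forall>a b. \<Phi> (mulA a b + mulA b (stA a)) = mulB (\<Phi> a) (\<Phi> b) + mulB (\<Phi> b) (stB (\<Phi> a))"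
    then show ?thesis
      using A.block_sum_eq_if_preserves_jordan_star[OF bij B.jordan_star_add _ t blocks]
      unfolding A.jordan_star_def B.jordan_star_def by blast
  next
    assume "\<forall>a b. \<Phi> (mulA a b - mulA b (stA a)) = mulB (\<Phi> a) (\<Phi> b) - mulB (\<Phi> b) (stB (\<Phi> a))"
    then show ?thesis
      using A.block_sum_eq_if_preserves_lie_star[OF bij B.lie_star_add _ t blocks]
      unfolding A.lie_star_def B.lie_star_def by blast
  qed
  with t show ?thesis by simp
qed

end
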